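(* Let $\mathbb{F}\in\{\mathbb{R},\mathbb{C}\}$, let $A$ be an $n\times m$ matrix over $\mathbb{F}$, let $\rho=\|A\|_{1,\infty}$ be the largest absolute value of the entries of $A$, and suppose every entry of $A$ of absolute value $\rho$ is the only nonzero element of its row and of its column. Let $C$ be obtained from $A$ by replacing all entries of absolute value $\rho$ by $0$ (so $\|C\|_{1,\infty}<\rho$). If $p\in(1,\infty]$ and $q\in[1,\infty)$ satisfy $p\le q$ and $$m^{1-(1/p)}\,n^{1/q}\,\|C\|_{1,\infty}\le\rho,$$ then $A\in\mathcal{E}_{1,\infty}(p,q)$. This inequality is satisfied if $p$ is sufficiently close to $1$ and $q$ is sufficiently large.
   Context: $\|x\|_p$ is the Hölder $\ell_p$ norm; $\|A\|_{p,q}=\max_{x\in\mathbb{F}^m,x\ne0}\|Ax\|_q/\|x\|_p$ (for real $A$ one may use $\mathbb{F}=\mathbb{R}$ or $\mathbb{C}$); $1/\infty=0$. For $p\in(1,\infty]$, $q\in[1,\infty)$, $\mathcal{E}_{1,\infty}(p,q)$ is the set of $n\times m$ matrices $A$ with $\|A\|_{r,s}=\|A\|_{p,q}$ for all $r\in[1,p)$ and $s\in(q,\infty]$. *)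

theory Defs
  imports "HOL-Analysis.Analysis"
begin

text \<open>Vectors in F^k are 'a^'k, and an n x m matrix is 'a^'m^'n
  (rows indexed by 'n, columns by 'm), with 'a = real or complex
  (any real normed field).\<close>

definition ereal_recip :: "ereal \<Rightarrow> real" where
  "ereal_recip p = (if p = \<infinity> then 0 else 1 / real_of_ereal p)"

definition lpnorm :: "ereal \<Rightarrow> ('a::real_normed_vector)^'k \<Rightarrow> real" where
  "lpnorm p x =
     (if p = \<infinity> then Max (range (\<lambda>i. norm (x $ i)))
      else (\<Sum>i\<in>UNIV. norm (x $ i) powr real_of_ereal p) powr (1 / real_of_ereal p))"

definition opnorm :: "ereal \<Rightarrow> ereal \<Rightarrow> ('a::real_normed_field)^'m^'n \<Rightarrow> real" where
  "opnorm p q A = Sup {lpnorm q (A *v x) / lpnorm p x | x. x \<noteq> 0}"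

definition E1inf :: "ereal \<Rightarrow> ereal \<Rightarrow> (('a::real_normed_field)^'m^'n) set" where
  "E1inf p q = {A. \<forall>r s. 1 \<le> r \<and> r < p \<and> q < s \<and> s \<le> \<infinity> \<longrightarrow> opnorm r s A = opnorm p q A}"

end

theory Submission
  imports Defs
begin

text \<open>The entries of modulus \<rho> = ||A||_{1,\<infinity>} are isolated, so they form \<rho> times a partial
  permutation \<sigma> : I \<rightarrow> J: on a row i in I we have |(Ax)_i| = \<rho> |x_{\<sigma> i}|, while the rows
  outside I only see the coordinates of x outside J, through entries bounded by c = ||C||_{1,\<infinity>}.
  On the first block, l_q \<le> l_p gives the bound \<rho> ||x_J||_p; on the second, Hoelder and
  l_q \<le> n^(1/q) l_\<infinity> give n^(1/q) m^(1-1/p) c ||x_{-J}||_p \<le> \<rho> ||x_{-J}||_p. Recombining the two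
  blocks, once more by l_q \<le> l_p, yields ||Ax||_q \<le> \<rho> ||x||_p. A unit vector on a peak column
  is mapped to a vector of norm \<rho> in every l_s, and l_p-norms decrease in p, so ||A||_{r,s} = \<rho>
  for all r \<le> p and s \<ge> q. The second claim holds because m^(1-1/p) n^(1/q) \<rightarrow> 1 as p \<rightarrow> 1 and
  q \<rightarrow> \<infinity>, while c < \<rho> unless c = 0.\<close>

lemma sum_powr_root_antimono:
  fixes a :: "'i \<Rightarrow> real"
  assumes "finite K" and a0: "\<And>j. j \<in> K \<Longrightarrow> 0 \<le> a j" and P: "0 < P" and PQ: "P \<le> Q"
  shows "(\<Sum>j\<in>K. a j powr Q) powr (1/Q) \<le> (\<Sum>j\<in>K. a j powr P) powr (1/P)"
proof -
  define S where "S = (\<Sum>j\<in>K. a j powr P) powr (1/P)"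
  have S_powr: "S powr P = (\<Sum>j\<in>K. a j powr P)"
    unfolding S_def using P by (simp add: powr_powr sum_nonneg)
  have a_le_S: "a j \<le> S" if "j \<in> K" for j
  proof -
    have "a j powr P \<le> (\<Sum>j\<in>K. a j powr P)"
      using that assms(1) by (intro member_le_sum) auto
    then have "(a j powr P) powr (1/P) \<le> S"
      unfolding S_def using P by (intro powr_mono2) auto
    then show ?thesis using a0[OF that] P by (simp add: powr_powr)
  qed
  have "(\<Sum>j\<in>K. a j powr Q) = (\<Sum>j\<in>K. a j powr P * a j powr (Q - P))"
    by (simp flip: powr_add)
  also have "\<dots> \<le> (\<Sum>j\<in>K. a j powr P * S powr (Q - P))"
    using a_le_S a0 PQ by (intro sum_mono mult_left_mono powr_mono2) auto
  also have "\<dots> = S powr P * S powr (Q - P)"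
    by (simp add: S_powr sum_distrib_right)
  also have "\<dots> = S powr Q"
    by (simp flip: powr_add)
  finally have "(\<Sum>j\<in>K. a j powr Q) powr (1/Q) \<le> (S powr Q) powr (1/Q)"
    using P PQ by (intro powr_mono2) (auto intro: sum_nonneg)
  also have "\<dots> = S" using P PQ by (simp add: S_def powr_powr)
  finally show ?thesis unfolding S_def .
qed

lemma powr_root_add_antimono:
  fixes s t :: real
  assumes "0 \<le> s" "0 \<le> t" "0 < P" "P \<le> Q"
  shows "(s powr Q + t powr Q) powr (1/Q) \<le> (s powr P + t powr P) powr (1/P)"
  using sum_powr_root_antimono[of UNIV "\<lambda>b. if b then s else t" P Q] assms
  by (simp add: UNIV_bool add.commute)

text \<open>Hoelder's inequality against the constant vector 1, proved by Young's inequality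
  after normalising by the power mean.\<close>
lemma sum_le_card_powr_mult_sum_powr_root:
  fixes a :: "'i \<Rightarrow> real"
  assumes K: "finite K" and a0: "\<And>j. j \<in> K \<Longrightarrow> 0 \<le> a j" and P: "1 < P"
  shows "(\<Sum>j\<in>K. a j) \<le> real (card K) powr (1 - 1/P) * (\<Sum>j\<in>K. a j powr P) powr (1/P)"
proof (cases "\<forall>j\<in>K. a j = 0")
  case True
  then show ?thesis by simp
next
  case False
  define X where "X = (\<Sum>j\<in>K. a j powr P)"
  define k where "k = real (card K)"
  obtain j0 where j0: "j0 \<in> K" "a j0 \<noteq> 0" using False by blast
  then have k: "0 < k" unfolding k_def using K by (auto simp: card_gt_0_iff)
  have X: "0 < X"
    unfolding X_def using j0 K a0 by (intro sum_pos2[of K j0]) auto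
  define S where "S = (X / k) powr (1/P)"
  have S: "0 < S" unfolding S_def using X k by simp
  define P' where "P' = P / (P - 1)"
  have P': "1 < P'" "1/P + 1/P' = 1" unfolding P'_def using P by (auto simp: field_simps)
  have "(\<Sum>j\<in>K. a j / S) \<le> (\<Sum>j\<in>K. (a j / S) powr P / P + 1 / P')"
    using Youngs_inequality[OF P P', of "a j / S" 1 for j] a0 S by (intro sum_mono) simp
  also have "\<dots> = X / S powr P / P + k / P'"
    using a0 S by (simp add: X_def k_def sum.distrib sum_divide_distrib powr_divide)
  also have "\<dots> = k"
    using X k P P' by (simp add: S_def powr_powr field_simps)
  finally have "(\<Sum>j\<in>K. a j) \<le> k * S"
    using S by (simp add: field_simps flip: sum_divide_distrib)
  also have "k * S = k powr (1 - 1/P) * X powr (1/P)"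
    unfolding S_def using k X by (simp add: powr_divide powr_diff)
  finally show ?thesis unfolding k_def X_def .
qed

lemma sum_powr_root_le_of_uniform_sum_bound:
  fixes y :: "'i \<Rightarrow> real" and a :: "'j \<Rightarrow> real"
  assumes "finite R" "finite L" and y0: "\<And>i. i \<in> R \<Longrightarrow> 0 \<le> y i"
    and y_le: "\<And>i. i \<in> R \<Longrightarrow> y i \<le> c * (\<Sum>j\<in>L. a j)"
    and a0: "\<And>j. j \<in> L \<Longrightarrow> 0 \<le> a j" and P: "1 < P" and Q: "0 < Q" and c: "0 \<le> c"
  shows "(\<Sum>i\<in>R. y i powr Q) powr (1/Q)
           \<le> real (card R) powr (1/Q) * real (card L) powr (1 - 1/P) * c * (\<Sum>j\<in>L. a j powr P) powr (1/P)"
proof -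
  define D where "D = c * (real (card L) powr (1 - 1/P) * (\<Sum>j\<in>L. a j powr P) powr (1/P))"
  have "y i \<le> D" if "i \<in> R" for i
  proof -
    have "(\<Sum>j\<in>L. a j) \<le> real (card L) powr (1 - 1/P) * (\<Sum>j\<in>L. a j powr P) powr (1/P)"
      using a0 P \<open>finite L\<close> by (intro sum_le_card_powr_mult_sum_powr_root)
    then show ?thesis unfolding D_def using y_le[OF that] c by (meson mult_left_mono order_trans)
  qed
  then have "(\<Sum>i\<in>R. y i powr Q) \<le> real (card R) * D powr Q"
    using y0 Q by (intro sum_bounded_above powr_mono2) auto
  then have "(\<Sum>i\<in>R. y i powr Q) powr (1/Q) \<le> (real (card R) * D powr Q) powr (1/Q)"
    using Q by (intro powr_mono2) (auto intro: sum_nonneg)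
  also have "\<dots> = real (card R) powr (1/Q) * D"
    using Q c by (simp add: D_def powr_mult powr_powr)
  finally show ?thesis by (simp add: D_def mult_ac)
qed

lemma sum_powr_root_le_of_blocks:
  fixes y :: "'i::finite \<Rightarrow> real" and a :: "'j::finite \<Rightarrow> real"
  assumes on_I: "(\<Sum>i\<in>I. y i powr Q) powr (1/Q) \<le> \<rho> * (\<Sum>j\<in>J. a j powr P) powr (1/P)"
    and off_I: "(\<Sum>i\<in>-I. y i powr Q) powr (1/Q) \<le> \<rho> * (\<Sum>j\<in>-J. a j powr P) powr (1/P)"
    and P: "0 < P" "P \<le> Q" and \<rho>: "0 \<le> \<rho>"
  shows "(\<Sum>i\<in>UNIV. y i powr Q) powr (1/Q) \<le> \<rho> * (\<Sum>j\<in>UNIV. a j powr P) powr (1/P)"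
proof -
  define U where "U = (\<Sum>j\<in>J. a j powr P)"
  define V where "V = (\<Sum>j\<in>-J. a j powr P)"
  have UV: "0 \<le> U" "0 \<le> V" unfolding U_def V_def by (auto intro: sum_nonneg)
  have "(\<Sum>i\<in>UNIV. y i powr Q) = (\<Sum>i\<in>I. y i powr Q) + (\<Sum>i\<in>-I. y i powr Q)"
    using sum.union_disjoint[of I "-I" "\<lambda>i. y i powr Q"] by (simp add: Compl_partition)
  also have "\<dots> = ((\<Sum>i\<in>I. y i powr Q) powr (1/Q)) powr Q + ((\<Sum>i\<in>-I. y i powr Q) powr (1/Q)) powr Q"
    using P by (simp add: powr_powr sum_nonneg)
  finally have "(\<Sum>i\<in>UNIV. y i powr Q) powr (1/Q)
      \<le> ((\<rho> * U powr (1/P)) powr Q + (\<rho> * V powr (1/P)) powr Q) powr (1/Q)"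
    using on_I off_I P unfolding U_def V_def by (auto intro!: powr_mono2 add_mono)
  also have "\<dots> \<le> ((\<rho> * U powr (1/P)) powr P + (\<rho> * V powr (1/P)) powr P) powr (1/P)"
    using \<rho> UV P by (intro powr_root_add_antimono) auto
  also have "\<dots> = \<rho> * (U + V) powr (1/P)"
    using \<rho> UV P by (simp add: powr_mult powr_powr flip: distrib_left)
  also have "U + V = (\<Sum>j\<in>UNIV. a j powr P)"
    using sum.union_disjoint[of J "-J" "\<lambda>j. a j powr P"] by (simp add: U_def V_def Compl_partition)
  finally show ?thesis .
qed

lemma sum_powr_root_le_peak_decomposition:
  fixes y :: "'i::finite \<Rightarrow> real" and a :: "'j::finite \<Rightarrow> real"
  assumes inj: "inj_on \<sigma> I" and y0: "\<And>i. 0 \<le> y i" and a0: "\<And>j. 0 \<le> a j"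
    and peak: "\<And>i. i \<in> I \<Longrightarrow> y i = \<rho> * a (\<sigma> i)"
    and off: "\<And>i. i \<notin> I \<Longrightarrow> y i \<le> c * (\<Sum>j\<in>-\<sigma> ` I. a j)"
    and P: "1 < P" and PQ: "P \<le> Q" and \<rho>: "0 \<le> \<rho>" and c: "0 \<le> c"
    and ineq: "real CARD('j) powr (1 - 1/P) * real CARD('i) powr (1/Q) * c \<le> \<rho>"
  shows "(\<Sum>i\<in>UNIV. y i powr Q) powr (1/Q) \<le> \<rho> * (\<Sum>j\<in>UNIV. a j powr P) powr (1/P)"
proof (rule sum_powr_root_le_of_blocks[where J = "\<sigma> ` I"])
  have Q: "0 < Q" using P PQ by simp
  have "(\<Sum>i\<in>I. y i powr Q) = \<rho> powr Q * (\<Sum>j\<in>\<sigma> ` I. a j powr Q)"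
    using \<rho> a0 inj by (simp add: peak powr_mult sum.reindex sum_distrib_left)
  then have "(\<Sum>i\<in>I. y i powr Q) powr (1/Q) = \<rho> * (\<Sum>j\<in>\<sigma> ` I. a j powr Q) powr (1/Q)"
    using \<rho> Q by (simp add: powr_mult powr_powr)
  also have "\<dots> \<le> \<rho> * (\<Sum>j\<in>\<sigma> ` I. a j powr P) powr (1/P)"
    using a0 P PQ \<rho> by (intro mult_left_mono sum_powr_root_antimono) auto
  finally show "(\<Sum>i\<in>I. y i powr Q) powr (1/Q) \<le> \<rho> * (\<Sum>j\<in>\<sigma> ` I. a j powr P) powr (1/P)" .
  let ?V = "(\<Sum>j\<in>-\<sigma> ` I. a j powr P) powr (1/P)"
  have "(\<Sum>i\<in>-I. y i powr Q) powr (1/Q)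
          \<le> real (card (-I)) powr (1/Q) * real (card (-\<sigma> ` I)) powr (1 - 1/P) * c * ?V"
    using y0 off a0 P Q c by (intro sum_powr_root_le_of_uniform_sum_bound) auto
  also have "\<dots> \<le> real CARD('i) powr (1/Q) * real CARD('j) powr (1 - 1/P) * c * ?V"
    using P Q c by (intro mult_right_mono mult_mono powr_mono2) (auto simp: card_mono)
  also have "\<dots> \<le> \<rho> * ?V"
    using ineq by (intro mult_right_mono) (auto simp: mult_ac)
  finally show "(\<Sum>i\<in>-I. y i powr Q) powr (1/Q) \<le> \<rho> * ?V" .
qed (use P PQ \<rho> in auto)

lemma lpnorm_ereal:
  "lpnorm (ereal P) x = (\<Sum>i\<in>UNIV. norm (x $ i) powr P) powr (1/P)"
  by (simp add: lpnorm_def)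

lemma lpnorm_infinity: "lpnorm \<infinity> x = Max (range (\<lambda>i. norm (x $ i)))"
  by (simp add: lpnorm_def)

lemma lpnorm_one: "lpnorm 1 x = (\<Sum>i\<in>UNIV. norm (x $ i))"
  by (simp add: lpnorm_def abs_of_nonneg sum_nonneg)

lemma norm_nth_le_lpnorm:
  fixes x :: "('a::real_normed_vector)^'k"
  assumes "0 < p"
  shows "norm (x $ i) \<le> lpnorm p x"
proof (cases p)
  case (real P)
  then have P: "0 < P" using assms by simp
  have "norm (x $ i) powr P \<le> (\<Sum>i\<in>UNIV. norm (x $ i) powr P)"
    by (intro member_le_sum) auto
  then have "(norm (x $ i) powr P) powr (1/P) \<le> (\<Sum>i\<in>UNIV. norm (x $ i) powr P) powr (1/P)"
    using P by (intro powr_mono2) auto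
  then show ?thesis using P by (simp add: real lpnorm_ereal powr_powr)
qed (use assms in \<open>auto simp: lpnorm_infinity\<close>)

lemma lpnorm_pos:
  fixes x :: "('a::real_normed_vector)^'k"
  assumes "0 < p" "x \<noteq> 0"
  shows "0 < lpnorm p x"
proof -
  obtain i where "x $ i \<noteq> 0" using assms(2) by (auto simp: vec_eq_iff)
  then show ?thesis
    using norm_nth_le_lpnorm[OF assms(1), of x i] by (metis less_le_trans zero_less_norm_iff)
qed

lemma lpnorm_zero: "0 < p \<Longrightarrow> lpnorm p (0 :: ('a::real_normed_vector)^'k) = 0"
  by (cases p) (auto simp: lpnorm_def)

lemma lpnorm_antimono:
  fixes x :: "('a::real_normed_vector)^'k"
  assumes "0 < p" "p \<le> q"
  shows "lpnorm q x \<le> lpnorm p x"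
proof (cases q)
  case (real Q)
  then obtain P where "p = ereal P" "0 < P" "P \<le> Q" using assms by (cases p) auto
  then show ?thesis
    using sum_powr_root_antimono[of UNIV "\<lambda>i. norm (x $ i)" P Q] by (simp add: real lpnorm_ereal)
qed (use assms norm_nth_le_lpnorm in \<open>auto simp: lpnorm_infinity\<close>)

lemma lpnorm_axis:
  fixes c :: "'a::real_normed_vector"
  assumes "0 < p"
  shows "lpnorm p (axis i c :: 'a^'k) = norm c"
proof (cases p)
  case (real P)
  have "(\<Sum>j\<in>UNIV. norm ((axis i c :: 'a^'k) $ j) powr P) = norm c powr P"
    by (simp add: axis_def if_distrib[of "\<lambda>v. norm v powr P"] cong: if_cong)
  then show ?thesis using real assms by (simp add: lpnorm_ereal powr_powr)
next
  case PInf
  have "Max (range (\<lambda>j. norm ((axis i c :: 'a^'k) $ j))) = norm c"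
    by (rule Max_eqI) (auto simp: axis_def)
  then show ?thesis using PInf by (simp add: lpnorm_infinity)
qed (use assms in simp)

lemma matrix_vector_mult_axis_nth: "(M *v axis j 1) $ i = M $ i $ j"
  by (simp add: matrix_vector_mult_def axis_def if_distrib[of "\<lambda>v. _ * v"] cong: if_cong)

lemma opnorm_eqI:
  fixes A :: "('a::real_normed_field)^'m^'n"
  assumes "0 < r" and bound: "\<And>x. lpnorm s (A *v x) \<le> B * lpnorm r x"
    and "z \<noteq> 0" and attained: "lpnorm s (A *v z) = B * lpnorm r z"
  shows "opnorm r s A = B"
  unfolding opnorm_def
proof (rule cSup_eq_maximum)
  show "B \<in> {lpnorm s (A *v x) / lpnorm r x |x. x \<noteq> 0}"
    using attained lpnorm_pos[of r z] assms by force
next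
  fix y assume "y \<in> {lpnorm s (A *v x) / lpnorm r x |x. x \<noteq> 0}"
  then obtain x where "x \<noteq> 0" "y = lpnorm s (A *v x) / lpnorm r x" by blast
  then show "y \<le> B" using bound[of x] lpnorm_pos[of r x] assms by (simp add: divide_le_eq)
qed

lemma opnorm_eq_isolated_column_entry:
  fixes A :: "('a::real_normed_field)^'m^'n"
  assumes bound: "\<And>x. lpnorm q (A *v x) \<le> norm (A $ i $ j) * lpnorm p x"
    and column: "\<And>i'. i' \<noteq> i \<Longrightarrow> A $ i' $ j = 0"
    and "0 < r" "r \<le> p" "0 < q" "q \<le> s"
  shows "opnorm r s A = norm (A $ i $ j)"
proof (rule opnorm_eqI[OF \<open>0 < r\<close>])
  have "0 < s" using \<open>0 < q\<close> \<open>q \<le> s\<close> by (rule less_le_trans)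
  show "lpnorm s (A *v x) \<le> norm (A $ i $ j) * lpnorm r x" for x
  proof -
    have "lpnorm s (A *v x) \<le> lpnorm q (A *v x)" by (rule lpnorm_antimono) fact+
    also have "\<dots> \<le> norm (A $ i $ j) * lpnorm p x" by (rule bound)
    also have "\<dots> \<le> norm (A $ i $ j) * lpnorm r x"
      using \<open>0 < r\<close> \<open>r \<le> p\<close> by (intro mult_left_mono lpnorm_antimono) auto
    finally show ?thesis .
  qed
  have "(A *v axis j 1) $ k = axis i (A $ i $ j) $ k" for k
    unfolding matrix_vector_mult_axis_nth using column by (auto simp: axis_def)
  then have "A *v axis j 1 = axis i (A $ i $ j)" by (simp add: vec_eq_iff)
  then show "lpnorm s (A *v axis j 1) = norm (A $ i $ j) * lpnorm r (axis j 1 :: 'a^'m)"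
    using \<open>0 < r\<close> \<open>0 < s\<close> by (simp add: lpnorm_axis)
qed (simp add: axis_eq_0_iff)

lemma E1inf_isolated_column_entry:
  fixes A :: "('a::real_normed_field)^'m^'n"
  assumes bound: "\<And>x. lpnorm q (A *v x) \<le> norm (A $ i $ j) * lpnorm p x"
    and column: "\<And>i'. i' \<noteq> i \<Longrightarrow> A $ i' $ j = 0"
    and "1 < p" "1 \<le> q"
  shows "A \<in> E1inf p q"
proof -
  have pos: "0 < x" if "1 \<le> x" for x :: ereal
    using that by (cases x) auto
  have "opnorm r s A = norm (A $ i $ j)" if "1 \<le> r" "r \<le> p" "q \<le> s" for r s
    using opnorm_eq_isolated_column_entry[OF bound column] pos that \<open>1 \<le> q\<close> by blast
  then show ?thesis
    unfolding E1inf_def using assms(3,4) by (auto simp del: ereal_less_eq)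
qed

lemma opnorm_1_infinity_eq_Max:
  fixes M :: "('a::real_normed_field)^'m^'n"
  shows "opnorm 1 \<infinity> M = Max (range (\<lambda>(i, j). norm (M $ i $ j)))" (is "_ = ?max")
proof -
  have entry_le: "norm (M $ i $ j) \<le> ?max" for i j
    by (rule Max_ge) auto
  have "?max \<in> range (\<lambda>(i, j). norm (M $ i $ j))" by (rule Max_in) auto
  then obtain i0 j0 where ij0: "norm (M $ i0 $ j0) = ?max" by fastforce
  have row_bound: "norm ((M *v x) $ i) \<le> ?max * lpnorm 1 x" for x i
  proof -
    have "norm ((M *v x) $ i) \<le> (\<Sum>j\<in>UNIV. norm (M $ i $ j) * norm (x $ j))"
      unfolding matrix_vector_mult_def by (auto intro: norm_sum[THEN order_trans] simp: norm_mult)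
    also have "\<dots> \<le> (\<Sum>j\<in>UNIV. ?max * norm (x $ j))"
      by (intro sum_mono mult_right_mono entry_le) auto
    finally show ?thesis by (simp add: lpnorm_one sum_distrib_left)
  qed
  show ?thesis
  proof (rule opnorm_eqI[where z = "axis j0 1"])
    show "lpnorm \<infinity> (M *v x) \<le> ?max * lpnorm 1 x" for x
      using row_bound by (simp add: lpnorm_infinity)
    have "Max (range (\<lambda>i. norm ((M *v axis j0 1) $ i))) = ?max"
      by (rule Max_eqI) (auto simp: matrix_vector_mult_axis_nth entry_le, metis ij0 rangeI)
    then show "lpnorm \<infinity> (M *v axis j0 1) = ?max * lpnorm 1 (axis j0 1 :: 'a^'m)"
      by (simp add: lpnorm_infinity lpnorm_axis)
  qed (auto simp: axis_eq_0_iff)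
qed

lemma norm_entry_le_opnorm_1_infinity:
  fixes M :: "('a::real_normed_field)^'m^'n"
  shows "norm (M $ i $ j) \<le> opnorm 1 \<infinity> M"
  unfolding opnorm_1_infinity_eq_Max by (rule Max_ge) auto

lemma opnorm_1_infinity_attained:
  fixes M :: "('a::real_normed_field)^'m^'n"
  obtains i j where "norm (M $ i $ j) = opnorm 1 \<infinity> M"
proof -
  have "Max (range (\<lambda>(i, j). norm (M $ i $ j))) \<in> range (\<lambda>(i, j). norm (M $ i $ j))"
    by (rule Max_in) auto
  then show ?thesis using that unfolding opnorm_1_infinity_eq_Max by fastforce
qed

lemma matrix_vector_mult_nth_single:
  assumes "\<And>k. k \<noteq> j \<Longrightarrow> M $ i $ k = 0"
  shows "(M *v x) $ i = M $ i $ j * x $ j"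
  unfolding matrix_vector_mult_def using assms by (simp add: sum.remove[of UNIV j])

lemma norm_matrix_vector_mult_nth_le:
  fixes M :: "('a::real_normed_field)^'m^'n"
  assumes zero: "\<And>k. k \<in> K \<Longrightarrow> M $ i $ k = 0" and bound: "\<And>k. k \<notin> K \<Longrightarrow> norm (M $ i $ k) \<le> c"
  shows "norm ((M *v x) $ i) \<le> c * (\<Sum>k\<in>-K. norm (x $ k))"
proof -
  have "(M *v x) $ i = (\<Sum>k\<in>-K. M $ i $ k * x $ k)"
    unfolding matrix_vector_mult_def vec_lambda_beta using zero by (intro sum.mono_neutral_right) auto
  also have "norm \<dots> \<le> (\<Sum>k\<in>-K. norm (M $ i $ k) * norm (x $ k))"
    by (auto intro: norm_sum[THEN order_trans] simp: norm_mult)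
  also have "\<dots> \<le> (\<Sum>k\<in>-K. c * norm (x $ k))"
    using bound by (intro sum_mono mult_right_mono) auto
  finally show ?thesis by (simp add: sum_distrib_left)
qed

lemma lpnorm_matrix_vector_mult_le_isolated_peaks:
  fixes A :: "('a::real_normed_field)^'m^'n"
  assumes isol: "\<And>i j. norm (A $ i $ j) = \<rho> \<Longrightarrow>
                   (\<forall>j'. j' \<noteq> j \<longrightarrow> A $ i $ j' = 0) \<and> (\<forall>i'. i' \<noteq> i \<longrightarrow> A $ i' $ j = 0)"
    and small: "\<And>i j. norm (A $ i $ j) \<noteq> \<rho> \<Longrightarrow> norm (A $ i $ j) \<le> c"
    and \<rho>: "0 \<le> \<rho>" and c: "0 \<le> c" and P: "1 < P" and PQ: "P \<le> Q"
    and ineq: "real CARD('m) powr (1 - 1/P) * real CARD('n) powr (1/Q) * c \<le> \<rho>"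
  shows "lpnorm (ereal Q) (A *v x) \<le> \<rho> * lpnorm (ereal P) x"
proof (cases "\<rho> = 0")
  case True
  then have "c = 0" using ineq c by (simp add: mult_le_0_iff)
  with True have "A = 0" using small by (auto simp: vec_eq_iff)
  then show ?thesis using True P PQ by (simp add: lpnorm_zero)
next
  case False
  define I where "I = {i. \<exists>j. norm (A $ i $ j) = \<rho>}"
  define \<sigma> where "\<sigma> i = (SOME j. norm (A $ i $ j) = \<rho>)" for i
  have peak_entry: "norm (A $ i $ \<sigma> i) = \<rho>" if "i \<in> I" for i
    using that unfolding I_def \<sigma>_def by (auto intro: someI)
  have "inj_on \<sigma> I"
  proof (rule inj_onI)
    fix i1 i2 assume "i1 \<in> I" "i2 \<in> I" "\<sigma> i1 = \<sigma> i2"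
    then show "i1 = i2" using isol[OF peak_entry[of i1]] peak_entry[of i2] False by force
  qed
  moreover have "norm ((A *v x) $ i) = \<rho> * norm (x $ \<sigma> i)" if "i \<in> I" for i
    using peak_entry[OF that] isol[OF peak_entry[OF that]]
    by (simp add: matrix_vector_mult_nth_single[where j = "\<sigma> i"] norm_mult)
  moreover have "norm ((A *v x) $ i) \<le> c * (\<Sum>j\<in>-\<sigma> ` I. norm (x $ j))" if "i \<notin> I" for i
  proof (rule norm_matrix_vector_mult_nth_le)
    show "A $ i $ j = 0" if "j \<in> \<sigma> ` I" for j
      using that \<open>i \<notin> I\<close> isol[OF peak_entry] by (metis imageE)
    show "norm (A $ i $ j) \<le> c" for j
      using \<open>i \<notin> I\<close> small unfolding I_def by blast
  qed
  ultimately show ?thesis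
    unfolding lpnorm_ereal
    by (intro sum_powr_root_le_peak_decomposition[OF _ _ _ _ _ P PQ \<rho> c ineq]) auto
qed

lemma exists_exponent_window:
  fixes M N c \<rho> :: real
  assumes "1 \<le> M" "1 \<le> N" "0 \<le> c" "0 \<le> \<rho>" and c_less: "c < \<rho> \<or> c = 0"
  shows "\<exists>\<delta>>0. \<exists>Q::real. \<forall>p' q'::ereal. 1 < p' \<and> p' < 1 + ereal \<delta> \<and> ereal Q < q' \<and> q' < \<infinity> \<longrightarrow>
           M powr (1 - ereal_recip p') * N powr (ereal_recip q') * c \<le> \<rho>"
proof (cases "c = 0")
  case True
  then show ?thesis using assms by (intro exI[of _ 1]) auto
next
  case False
  then have "c < \<rho>" using c_less by simp
  have "((\<lambda>t. (M * N) powr t * c) \<longlongrightarrow> (M * N) powr 0 * c) (at_right 0)"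
    using assms by (intro tendsto_intros) auto
  then have "\<forall>\<^sub>F t in at_right 0. (M * N) powr t * c < \<rho>"
    using \<open>c < \<rho>\<close> assms by (intro order_tendstoD(2)) auto
  then obtain t where t: "0 < t" "(M * N) powr t * c < \<rho>"
    unfolding eventually_at_right_field by (metis dense)
  show ?thesis
  proof (rule exI[of _ t], intro conjI \<open>0 < t\<close> exI[of _ "1/t"] allI impI)
    fix p' q' :: ereal
    assume window: "1 < p' \<and> p' < 1 + ereal t \<and> ereal (1/t) < q' \<and> q' < \<infinity>"
    then obtain P Q where PQ: "p' = ereal P" "q' = ereal Q" "1 < P" "P < 1 + t" "1/t < Q"
      by (cases p'; cases q') auto
    have "0 < Q" using PQ t by (auto intro: less_trans[of 0 "1/t"])
    have "1 - 1/P = (P - 1) / P" using PQ by (simp add: field_simps)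
    also have "\<dots> \<le> P - 1" using divide_left_mono[of 1 P "P - 1"] PQ by simp
    finally have "M powr (1 - 1/P) \<le> M powr t" using assms PQ by (intro powr_mono) auto
    moreover have "N powr (1/Q) \<le> N powr t"
      using assms PQ t \<open>0 < Q\<close> by (intro powr_mono) (auto simp: field_simps)
    ultimately have "M powr (1 - 1/P) * N powr (1/Q) * c \<le> (M * N) powr t * c"
      using assms by (auto simp: powr_mult intro!: mult_mono mult_right_mono)
    then show "M powr (1 - ereal_recip p') * N powr (ereal_recip q') * c \<le> \<rho>"
      using t PQ by (simp add: ereal_recip_def)
  qed
qed

theorem mainTheorem6:
  fixes A :: "('a::real_normed_field)^'m^'n" and p q :: ereal
  defines "\<rho> \<equiv> opnorm 1 \<infinity> A"
  defines "C \<equiv> (\<chi> i j. if norm (A $ i $ j) = \<rho> then 0 else A $ i $ j) :: 'a^'m^'n"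
  assumes isol: "\<And>i j. norm (A $ i $ j) = \<rho> \<Longrightarrow>
                    (\<forall>j'. j' \<noteq> j \<longrightarrow> A $ i $ j' = 0) \<and> (\<forall>i'. i' \<noteq> i \<longrightarrow> A $ i' $ j = 0)"
    and p: "1 < p" and q: "1 \<le> q" "q < \<infinity>" and pq: "p \<le> q"
    and ineq: "real CARD('m) powr (1 - ereal_recip p) * real CARD('n) powr (ereal_recip q)
                 * opnorm 1 \<infinity> C \<le> \<rho>"
  shows "A \<in> E1inf p q \<and>
         (\<exists>\<delta>>0. \<exists>Q::real. \<forall>p' q'::ereal. 1 < p' \<and> p' < 1 + ereal \<delta> \<and> ereal Q < q' \<and> q' < \<infinity> \<longrightarrow>
            real CARD('m) powr (1 - ereal_recip p') * real CARD('n) powr (ereal_recip q')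
              * opnorm 1 \<infinity> C \<le> \<rho>)"
proof -
  define c where "c = opnorm 1 \<infinity> C"
  have \<rho>: "0 \<le> \<rho>" and c: "0 \<le> c"
    unfolding \<rho>_def c_def by (rule order_trans[OF norm_ge_zero norm_entry_le_opnorm_1_infinity])+
  have small: "norm (A $ i $ j) \<le> c" if "norm (A $ i $ j) \<noteq> \<rho>" for i j
    using norm_entry_le_opnorm_1_infinity[of C i j] that by (simp add: c_def C_def)
  obtain P Q where PQ: "p = ereal P" "q = ereal Q" "1 < P" "P \<le> Q"
    using p q pq by (cases p; cases q) auto
  obtain i0 j0 where peak: "norm (A $ i0 $ j0) = \<rho>"
    using opnorm_1_infinity_attained unfolding \<rho>_def by metis
  have "lpnorm q (A *v x) \<le> norm (A $ i0 $ j0) * lpnorm p x" for x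
    using lpnorm_matrix_vector_mult_le_isolated_peaks[OF isol small \<rho> c PQ(3,4)] ineq
    by (simp add: PQ peak ereal_recip_def c_def)
  then have "A \<in> E1inf p q"
    using isol[OF peak] p q by (intro E1inf_isolated_column_entry) auto
  moreover have "c < \<rho> \<or> c = 0"
  proof -
    obtain i j where "norm (C $ i $ j) = c" using opnorm_1_infinity_attained unfolding c_def by metis
    then show ?thesis
      using norm_entry_le_opnorm_1_infinity[of A i j] by (auto simp: C_def \<rho>_def split: if_splits)
  qed
  then have "\<exists>\<delta>>0. \<exists>Q::real. \<forall>p' q'::ereal. 1 < p' \<and> p' < 1 + ereal \<delta> \<and> ereal Q < q' \<and> q' < \<infinity> \<longrightarrow>
      real CARD('m) powr (1 - ereal_recip p') * real CARD('n) powr (ereal_recip q') * c \<le> \<rho>"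
    using \<rho> c by (intro exists_exponent_window) auto
  ultimately show ?thesis unfolding c_def by blast
qed

end
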